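(* Fix an integer $k\ge 3$, and let $N$ range over positive integers divisible by $\mathrm{lcm}\{2,k\}$. Let $\alpha$ be a random permutation uniformly distributed on the conjugacy class $[2^{N/2}]$ of the symmetric group $S_N$, and let $\beta$ be a fixed permutation in the conjugacy class $[k^{N/k}]$. Then, as $N\to\infty$, $$\Pr[C_{\alpha\beta}\ge t] = O\left(\left(\tfrac{2}{3}\right)^{t/2} N\right),$$ with the implied constant independent of $N$ and $t$.
   Context: For a permutation $\pi$ of $\{1,\ldots,N\}$, $C_\pi$ denotes the number of cycles of $\pi$. The conjugacy class $[2^{N/2}]$ consists of the permutations of $\{1,\ldots,N\}$ all of whose cycles have length $2$; $[k^{N/k}]$ consists of the permutations all of whose cycles have length $k$. The product $\alpha\beta$ denotes the permutation obtained by first performing $\alpha$ and then $\beta$. *)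

theory Defs
  imports Complex_Main "HOL-Combinatorics.Combinatorics"
begin

(* number of cycles of a permutation p of {1..N} (fixed points count as cycles) *)
definition num_cycles :: "nat \<Rightarrow> (nat \<Rightarrow> nat) \<Rightarrow> nat" where
  "num_cycles N p = card ((\<lambda>x. orbit p x) ` {1..N})"

(* the conjugacy class [m^(N/m)] of S_N: permutations of {1..N} all of whose cycles have length m *)
definition cyc_class :: "nat \<Rightarrow> nat \<Rightarrow> (nat \<Rightarrow> nat) set" where
  "cyc_class N m = {p. p permutes {1..N} \<and> (\<forall>x\<in>{1..N}. card (orbit p x) = m)}"

(* Pr[C_{alpha beta} >= t] for alpha uniform on [2^(N/2)]; alpha beta = first alpha then beta *)
definition prob_cycles_ge :: "nat \<Rightarrow> (nat \<Rightarrow> nat) \<Rightarrow> nat \<Rightarrow> real" where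
  "prob_cycles_ge N \<beta> t =
     real (card {\<alpha> \<in> cyc_class N 2. num_cycles N (\<beta> \<circ> \<alpha>) \<ge> t}) / real (card (cyc_class N 2))"

end

theory Submission
  imports Defs
begin

(*
  Reveal the matching alpha one pair at a time. If T is the set of points not yet matched and f is
  beta composed with the transpositions revealed so far, then beta o alpha = f o alpha' for a perfect
  matching alpha' of T. Call a cycle of f short if it meets T in at most two points; the potential is
  the number of short cycles. Pairing a fixed a in T with b either merges two cycles of f (b off the
  cycle of a), which does not raise the potential, or cuts the cycle of a in two at the position of b.
  Going through the possible positions shows that the weight (5/4)^potential grows on average by at
  most the factor (|T| + 1) / (|T| - 1). Telescoping, the expectation of (5/4)^C(beta o alpha) is at
  most (N + 1) (5/4)^potential(beta) = N + 1, because all cycles of beta have length k >= 3, and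
  Markov's inequality gives Pr[C >= t] <= (N + 1) (4/5)^t <= 2 N (2/3)^(t/2).
*)

section \<open>Perfect matchings\<close>

definition perfect_matchings :: "'a set \<Rightarrow> ('a \<Rightarrow> 'a) set" where
  "perfect_matchings T = {\<alpha>. \<alpha> permutes T \<and> (\<forall>x\<in>T. \<alpha> x \<noteq> x \<and> \<alpha> (\<alpha> x) = x)}"

lemma perfect_matchings_iff:
  "\<alpha> \<in> perfect_matchings T \<longleftrightarrow>
     (\<forall>x. x \<notin> T \<longrightarrow> \<alpha> x = x) \<and> (\<forall>x\<in>T. \<alpha> x \<in> T \<and> \<alpha> x \<noteq> x \<and> \<alpha> (\<alpha> x) = x)"
proof
  assume "\<alpha> \<in> perfect_matchings T"
  then show "(\<forall>x. x \<notin> T \<longrightarrow> \<alpha> x = x) \<and> (\<forall>x\<in>T. \<alpha> x \<in> T \<and> \<alpha> x \<noteq> x \<and> \<alpha> (\<alpha> x) = x)"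
    by (auto simp: perfect_matchings_def permutes_in_image permutes_not_in)
next
  assume H: "(\<forall>x. x \<notin> T \<longrightarrow> \<alpha> x = x) \<and> (\<forall>x\<in>T. \<alpha> x \<in> T \<and> \<alpha> x \<noteq> x \<and> \<alpha> (\<alpha> x) = x)"
  then have "\<alpha> \<circ> \<alpha> = id" by (auto simp: fun_eq_iff)
  then have "bij_betw \<alpha> T T"
    using H by (intro bij_betwI[where g=\<alpha>]) (auto simp: fun_eq_iff)
  with H show "\<alpha> \<in> perfect_matchings T"
    by (auto simp: perfect_matchings_def intro: bij_imp_permutes)
qed

lemma perfect_matchings_empty: "perfect_matchings {} = {id}"
  by (auto simp: perfect_matchings_def)

lemma finite_perfect_matchings: "finite T \<Longrightarrow> finite (perfect_matchings T)"
  by (rule finite_subset[OF _ finite_permutations]) (auto simp: perfect_matchings_def)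

lemma perfect_matchings_decompose:
  assumes "a \<in> T"
  shows "perfect_matchings T =
           (\<Union>b\<in>T - {a}. (\<circ>) (transpose a b) ` perfect_matchings (T - {a, b}))"
proof (intro set_eqI iffI)
  fix \<alpha> assume \<alpha>: "\<alpha> \<in> perfect_matchings T"
  obtain b where b: "b \<in> T - {a}" "\<alpha> a = b" "\<alpha> b = a"
    using \<alpha> assms by (auto simp: perfect_matchings_iff)
  have "\<alpha> x \<notin> {a, b}" if "x \<in> T - {a, b}" for x
    using \<alpha> that b by (auto simp: perfect_matchings_iff)
  then have "transpose a b \<circ> \<alpha> \<in> perfect_matchings (T - {a, b})"
    using \<alpha> b assms by (auto simp: perfect_matchings_iff transpose_def)
  moreover have "\<alpha> = transpose a b \<circ> (transpose a b \<circ> \<alpha>)"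
    by (simp add: fun_eq_iff)
  ultimately show "\<alpha> \<in> (\<Union>b\<in>T - {a}. (\<circ>) (transpose a b) ` perfect_matchings (T - {a, b}))"
    using b by blast
next
  fix \<alpha> assume "\<alpha> \<in> (\<Union>b\<in>T - {a}. (\<circ>) (transpose a b) ` perfect_matchings (T - {a, b}))"
  then obtain b \<alpha>' where b: "b \<in> T - {a}" and \<alpha>': "\<alpha>' \<in> perfect_matchings (T - {a, b})"
    and \<alpha>_eq: "\<alpha> = transpose a b \<circ> \<alpha>'" by blast
  have \<alpha>'_out: "\<alpha>' x = x" if "x \<notin> T - {a, b}" for x
    using \<alpha>' that unfolding perfect_matchings_iff by blast
  have \<alpha>'_T: "\<alpha>' x \<in> T - {a, b} \<and> \<alpha>' x \<noteq> x \<and> \<alpha>' (\<alpha>' x) = x" if "x \<in> T - {a, b}" for x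
    using \<alpha>' that unfolding perfect_matchings_iff by blast
  have "transpose a b (\<alpha>' x) = x" if "x \<notin> T" for x
  proof -
    have "x \<noteq> a" "x \<noteq> b" using b assms that by auto
    then show ?thesis using \<alpha>'_out[of x] that by simp
  qed
  moreover have "transpose a b (\<alpha>' x) \<in> T \<and> transpose a b (\<alpha>' x) \<noteq> x \<and>
      transpose a b (\<alpha>' (transpose a b (\<alpha>' x))) = x" if x: "x \<in> T" for x
  proof (cases "x \<in> {a, b}")
    case True then show ?thesis using \<alpha>'_out[of a] \<alpha>'_out[of b] b assms by auto
  next
    case False then show ?thesis using \<alpha>'_T[of x] x by auto
  qed
  ultimately show "\<alpha> \<in> perfect_matchings T"
    unfolding perfect_matchings_iff \<alpha>_eq o_apply by blast
qed

lemma sum_perfect_matchings: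
  assumes "finite T" "a \<in> T"
  shows "(\<Sum>\<alpha>\<in>perfect_matchings T. g \<alpha>) =
           (\<Sum>b\<in>T - {a}. \<Sum>\<alpha>\<in>perfect_matchings (T - {a, b}). g (transpose a b \<circ> \<alpha>))"
proof -
  have fixes_a: "\<alpha> a = a" if "\<alpha> \<in> perfect_matchings (T - {a, b})" for \<alpha> b
    using that by (simp add: perfect_matchings_iff)
  have disjoint: "(\<circ>) (transpose a b) ` perfect_matchings (T - {a, b}) \<inter>
      (\<circ>) (transpose a c) ` perfect_matchings (T - {a, c}) = {}" if "b \<noteq> c" for b c
  proof -
    have "transpose a b \<circ> \<alpha> \<noteq> transpose a c \<circ> \<alpha>'"
      if "\<alpha> \<in> perfect_matchings (T - {a, b})" "\<alpha>' \<in> perfect_matchings (T - {a, c})" for \<alpha> \<alpha>'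
      using fixes_a[OF that(1)] fixes_a[OF that(2)] \<open>b \<noteq> c\<close> by (metis comp_apply transpose_apply_first)
    then show ?thesis by blast
  qed
  have inj: "inj_on ((\<circ>) (transpose a b)) A" for b and A :: "('a \<Rightarrow> 'a) set"
    by (rule inj_onI) (metis comp_assoc transpose_comp_involutory id_comp)
  show ?thesis
    unfolding perfect_matchings_decompose[OF assms(2)] using assms(1) disjoint
    by (subst sum.UNION_disjoint) (auto simp: finite_perfect_matchings sum.reindex[OF inj])
qed

fun matching_count :: "nat \<Rightarrow> nat" where
  "matching_count 0 = 1"
| "matching_count (Suc 0) = 0"
| "matching_count (Suc (Suc n)) = Suc n * matching_count n"

lemma matching_count_rec: "0 < n \<Longrightarrow> matching_count n = (n - 1) * matching_count (n - 2)"
  by (cases n rule: matching_count.cases) simp_all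

lemma card_perfect_matchings: "finite T \<Longrightarrow> card (perfect_matchings T) = matching_count (card T)"
proof (induction "card T" arbitrary: T rule: less_induct)
  case less
  show ?case
  proof (cases "T = {}")
    case True then show ?thesis by (simp add: perfect_matchings_empty)
  next
    case False
    then obtain a where a: "a \<in> T" by auto
    have "card (perfect_matchings T) = (\<Sum>b\<in>T - {a}. card (perfect_matchings (T - {a, b})))"
      using sum_perfect_matchings[OF less.prems a, of "\<lambda>_. 1::nat"] by simp
    also have "\<dots> = (\<Sum>b\<in>T - {a}. matching_count (card T - 2))"
    proof (rule sum.cong[OF refl])
      fix b assume b: "b \<in> T - {a}"
      then have "card (T - {a, b}) = card T - 2"
        using a less.prems by (subst card_Diff_subset) (auto simp: card_insert_if)
      moreover have "card T - 2 < card T" using a less.prems card_gt_0_iff by (metis diff_less empty_iff zero_less_numeral)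
      ultimately show "card (perfect_matchings (T - {a, b})) = matching_count (card T - 2)"
        using less.hyps[of "T - {a, b}"] less.prems by simp
    qed
    also have "\<dots> = (card T - 1) * matching_count (card T - 2)"
      using a less.prems by simp
    also have "\<dots> = matching_count (card T)"
      using matching_count_rec[of "card T"] a less.prems card_gt_0_iff by force
    finally show ?thesis .
  qed
qed

section \<open>Cycles and the potential\<close>

definition cycles :: "'a set \<Rightarrow> ('a \<Rightarrow> 'a) \<Rightarrow> 'a set set" where
  "cycles S f = (\<lambda>x. orbit f x) ` S"

definition short_cycles :: "'a set \<Rightarrow> 'a set set \<Rightarrow> 'a set set" where
  "short_cycles T C = {c \<in> C. card (c \<inter> T) \<le> 2}"

definition potential :: "'a set \<Rightarrow> 'a set \<Rightarrow> ('a \<Rightarrow> 'a) \<Rightarrow> nat" where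
  "potential S T f = card (short_cycles T (cycles S f))"

lemma finite_cycles: "finite S \<Longrightarrow> finite (cycles S f)"
  by (simp add: cycles_def)

lemma card_short_cycles_insert:
  assumes "finite C" "X \<notin> C"
  shows "card (short_cycles T (insert X C)) = card (short_cycles T C) + of_bool (card (X \<inter> T) \<le> 2)"
proof -
  have "short_cycles T (insert X C)
      = (if card (X \<inter> T) \<le> 2 then insert X (short_cycles T C) else short_cycles T C)"
    by (auto simp: short_cycles_def)
  moreover have "finite (short_cycles T C)" "X \<notin> short_cycles T C"
    using assms by (simp_all add: short_cycles_def)
  ultimately show ?thesis by simp
qed

lemma short_cycles_cong:
  "(\<And>c. c \<in> C \<Longrightarrow> c \<inter> T' = c \<inter> T) \<Longrightarrow> short_cycles T' C = short_cycles T C"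
  unfolding short_cycles_def by (intro Collect_cong conj_cong refl) auto

lemma potential_remove_orbit:
  assumes "finite S" "a \<in> S"
  shows "potential S T f = card (short_cycles T (cycles S f - {orbit f a}))
    + of_bool (card (orbit f a \<inter> T) \<le> 2)"
proof -
  define R where "R = cycles S f - {orbit f a}"
  have "cycles S f = insert (orbit f a) R"
    using assms(2) by (auto simp: cycles_def R_def)
  moreover have "finite R" "orbit f a \<notin> R" using assms(1) by (simp_all add: R_def finite_cycles)
  ultimately show ?thesis
    unfolding potential_def R_def[symmetric] by (simp add: card_short_cycles_insert)
qed

lemma orbit_eq_of_mem: "permutation f \<Longrightarrow> y \<in> orbit f x \<Longrightarrow> orbit f y = orbit f x"
  by (metis cyclic_on_orbit' orbit_cyclic_eq3)

lemma funpow_agree_along_orbit: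
  assumes start: "g y = f x"
    and agree: "\<And>i. 0 < i \<Longrightarrow> i < n \<Longrightarrow> g ((f ^^ i) x) = f ((f ^^ i) x)"
  shows "0 < i \<Longrightarrow> i \<le> n \<Longrightarrow> (g ^^ i) y = (f ^^ i) x"
proof (induction i)
  case (Suc i)
  then show ?case
    using start agree[of i] by (cases "i = 0") auto
qed simp

lemma orbit_conv_funpow_period:
  assumes "(f ^^ n) x = x" "0 < n"
  shows "orbit f x = (\<lambda>i. (f ^^ i) x) ` {1..n}"
proof -
  have "{(f ^^ m) x | m. m < n} = (\<lambda>i. (f ^^ i) x) ` {1..n}"
  proof (intro set_eqI iffI)
    fix y assume "y \<in> {(f ^^ m) x | m. m < n}"
    then obtain m where "m < n" "y = (f ^^ m) x" by blast
    then show "y \<in> (\<lambda>i. (f ^^ i) x) ` {1..n}"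
      using assms by (cases "m = 0") (auto intro: image_eqI[where x=n])
  next
    fix y assume "y \<in> (\<lambda>i. (f ^^ i) x) ` {1..n}"
    then obtain i where "i \<in> {1..n}" "y = (f ^^ i) x" by blast
    then show "y \<in> {(f ^^ m) x | m. m < n}"
      using assms by (cases "i = n") (auto intro: exI[where x=0])
  qed
  then show ?thesis using orbit_altdef_bounded[OF assms] by simp
qed

lemma inj_on_funpow_period:
  assumes "x \<in> orbit f x"
  shows "inj_on (\<lambda>i. (f ^^ i) x) {1..funpow_dist1 f x x}"
proof (rule inj_onI)
  define p where "p = funpow_dist1 f x x"
  have p: "0 < p" "(f ^^ p) x = x" using funpow_dist1_prop[OF assms] by (simp_all add: p_def)
  fix i j assume i: "i \<in> {1..funpow_dist1 f x x}" and j: "j \<in> {1..funpow_dist1 f x x}"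
    and eq: "(f ^^ i) x = (f ^^ j) x"
  have "(f ^^ (i mod p)) x = (f ^^ (j mod p)) x"
    using eq p by (simp add: funpow_mod_eq)
  then have "i mod p = j mod p"
    using inj_onD[OF inj_on_funpow_dist1[OF assms]] p by (simp add: p_def)
  then show "i = j" using i j by (auto simp: p_def mod_if split: if_splits)
qed

section \<open>Composing with a transposition\<close>

locale transposition_in_cycle =
  fixes S :: "'a set" and f :: "'a \<Rightarrow> 'a" and a b :: 'a
  assumes finite: "finite S" and permutes: "f permutes S" and a_in: "a \<in> S"
    and b_in_orbit: "b \<in> orbit f a" and a_ne_b: "a \<noteq> b"
begin

abbreviation "\<sigma> \<equiv> f \<circ> transpose a b"

definition period :: nat where "period = funpow_dist1 f a a"
definition dist :: nat where "dist = funpow_dist1 f a b"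

lemma permutation: "permutation f"
  using finite permutes permutation_permutes by blast

lemma b_in: "b \<in> S"
  using b_in_orbit permutes_orbit_subset[OF permutes a_in] by blast

lemma permutes_swap: "\<sigma> permutes S"
  using a_in b_in by (intro permutes_compose[OF permutes_swap_id permutes])

lemma permutation_swap: "permutation \<sigma>"
  using finite permutes_swap permutation_permutes by blast

lemma a_in_orbit: "a \<in> orbit f a"
  by (rule permutation_self_in_orbit[OF permutation])

lemma funpow_period: "(f ^^ period) a = a" and funpow_dist: "(f ^^ dist) a = b"
  unfolding period_def dist_def
  using funpow_dist1_prop[OF a_in_orbit] funpow_dist1_prop[OF b_in_orbit] by simp_all

lemma funpow_ne_a: "0 < i \<Longrightarrow> i < period \<Longrightarrow> (f ^^ i) a \<noteq> a"
  unfolding period_def by (rule funpow_dist1_least)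

lemma dist_less_period: "0 < dist" "dist < period"
proof -
  show "0 < dist" by (simp add: dist_def)
  have "dist \<le> period"
    using funpow_dist1_le_self[OF funpow_period _ b_in_orbit] by (simp add: dist_def period_def)
  moreover have "dist \<noteq> period" using funpow_period funpow_dist a_ne_b by metis
  ultimately show "dist < period" by simp
qed

lemma funpow_inj: "inj_on (\<lambda>i. (f ^^ i) a) {1..period}"
  unfolding period_def by (rule inj_on_funpow_period[OF a_in_orbit])

lemma funpow_ne_b: "0 < i \<Longrightarrow> i \<le> period \<Longrightarrow> i \<noteq> dist \<Longrightarrow> (f ^^ i) a \<noteq> b"
  using inj_onD[OF funpow_inj, of i dist] funpow_dist dist_less_period by auto

lemma orbit_eq: "orbit f a = (\<lambda>i. (f ^^ i) a) ` {1..period}"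
  by (rule orbit_conv_funpow_period[OF funpow_period]) (simp add: period_def)

lemma orbit_swap_b: "orbit \<sigma> b = (\<lambda>i. (f ^^ i) a) ` {1..dist}"
proof -
  have "(\<sigma> ^^ i) b = (f ^^ i) a" if "0 < i" "i \<le> dist" for i
  proof (rule funpow_agree_along_orbit[where n=dist, OF _ _ that])
    show "\<sigma> b = f a" by simp
    fix i assume "0 < i" "i < dist"
    then show "\<sigma> ((f ^^ i) a) = f ((f ^^ i) a)"
      using funpow_ne_a[of i] funpow_ne_b[of i] dist_less_period by simp
  qed
  moreover have "orbit \<sigma> b = (\<lambda>i. (\<sigma> ^^ i) b) ` {1..dist}"
    using orbit_conv_funpow_period[where f=\<sigma> and n=dist and x=b] calculation[of dist]
      funpow_dist dist_less_period by simp
  ultimately show ?thesis by (auto intro!: image_cong)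
qed

lemma orbit_swap_a: "orbit \<sigma> a = (\<lambda>i. (f ^^ i) a) ` {dist<..period}"
proof -
  have shift: "(f ^^ i) b = (f ^^ (i + dist)) a" for i
    by (simp only: funpow_add o_apply funpow_dist)
  have "(\<sigma> ^^ i) a = (f ^^ i) b" if "0 < i" "i \<le> period - dist" for i
  proof (rule funpow_agree_along_orbit[where n="period - dist", OF _ _ that])
    show "\<sigma> a = f b" by simp
    fix i assume "0 < i" "i < period - dist"
    then show "\<sigma> ((f ^^ i) b) = f ((f ^^ i) b)"
      using funpow_ne_a[of "i + dist"] funpow_ne_b[of "i + dist"] by (simp add: shift)
  qed
  moreover have "orbit \<sigma> a = (\<lambda>i. (\<sigma> ^^ i) a) ` {1..period - dist}"
    using orbit_conv_funpow_period[where f=\<sigma> and n="period - dist" and x=a]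
      calculation[of "period - dist"] funpow_period dist_less_period by (simp add: shift)
  ultimately have "orbit \<sigma> a = (\<lambda>i. (f ^^ i) a) ` ((\<lambda>i. i + dist) ` {1..period - dist})"
    unfolding image_image by (auto simp: shift intro!: image_cong)
  also have "(\<lambda>i. i + dist) ` {1..period - dist} = {dist<..period}"
    using dist_less_period by auto
  finally show ?thesis .
qed

lemma orbit_swap_Un: "orbit \<sigma> a \<union> orbit \<sigma> b = orbit f a"
proof -
  have "{dist<..period} \<union> {1..dist} = {1..period}" using dist_less_period by auto
  then show ?thesis unfolding orbit_swap_a orbit_swap_b orbit_eq image_Un[symmetric] by simp
qed

lemma orbit_swap_disjoint: "orbit \<sigma> a \<inter> orbit \<sigma> b = {}"
proof -
  have "(f ^^ i) a \<noteq> (f ^^ j) a" if "i \<in> {dist<..period}" "j \<in> {1..dist}" for i j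
    using inj_onD[OF funpow_inj, of i j] that dist_less_period by auto
  then show ?thesis unfolding orbit_swap_a orbit_swap_b by blast
qed

lemma in_orbit_swap: "a \<in> orbit \<sigma> a" "b \<in> orbit \<sigma> b"
  using permutation_self_in_orbit[OF permutation_swap] by auto

lemma orbit_avoids: "x \<notin> orbit f a \<Longrightarrow> a \<notin> orbit f x \<and> b \<notin> orbit f x"
  using orbit_eq_of_mem[OF permutation] permutation_self_in_orbit[OF permutation] b_in_orbit
  by metis

lemma orbit_swap_other: "x \<notin> orbit f a \<Longrightarrow> orbit \<sigma> x = orbit f x"
  using orbit_avoids
  by (intro orbit_cong permutation_self_in_orbit[OF permutation]) (auto simp: transpose_def)

lemma cycles_avoid: "c \<in> cycles S f - {orbit f a} \<Longrightarrow> a \<notin> c \<and> b \<notin> c"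
  unfolding cycles_def
  using orbit_avoids orbit_eq_of_mem[OF permutation] by blast

lemma cycles_swap:
  "cycles S \<sigma> = insert (orbit \<sigma> a) (insert (orbit \<sigma> b) (cycles S f - {orbit f a}))"
proof (intro set_eqI iffI)
  fix c assume "c \<in> cycles S \<sigma>"
  then obtain x where x: "x \<in> S" "c = orbit \<sigma> x" by (auto simp: cycles_def)
  show "c \<in> insert (orbit \<sigma> a) (insert (orbit \<sigma> b) (cycles S f - {orbit f a}))"
  proof (cases "x \<in> orbit f a")
    case True
    then show ?thesis
      using x orbit_swap_Un orbit_eq_of_mem[OF permutation_swap] by blast
  next
    case False
    then have "orbit f x \<noteq> orbit f a" using permutation_self_in_orbit[OF permutation] by blast
    then show ?thesis using x False orbit_swap_other by (auto simp: cycles_def)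
  qed
next
  fix c assume c: "c \<in> insert (orbit \<sigma> a) (insert (orbit \<sigma> b) (cycles S f - {orbit f a}))"
  show "c \<in> cycles S \<sigma>"
  proof (cases "c \<in> cycles S f - {orbit f a}")
    case True
    then obtain x where "x \<in> S" "c = orbit f x" "orbit f x \<noteq> orbit f a"
      by (auto simp: cycles_def)
    moreover then have "x \<notin> orbit f a" using orbit_eq_of_mem[OF permutation] by metis
    ultimately show ?thesis using orbit_swap_other unfolding cycles_def by (metis image_eqI)
  next
    case False
    then show ?thesis using c a_in b_in by (auto simp: cycles_def)
  qed
qed

lemma potential_swap:
  "potential S T \<sigma> = card (short_cycles T (cycles S f - {orbit f a}))
     + of_bool (card (orbit \<sigma> a \<inter> T) \<le> 2) + of_bool (card (orbit \<sigma> b \<inter> T) \<le> 2)"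
proof -
  define R where "R = cycles S f - {orbit f a}"
  have fin: "finite R" using finite by (simp add: R_def finite_cycles)
  have notin: "orbit \<sigma> b \<notin> R" "orbit \<sigma> a \<notin> insert (orbit \<sigma> b) R"
    using cycles_avoid in_orbit_swap orbit_swap_disjoint unfolding R_def by blast+
  show ?thesis
    unfolding potential_def cycles_swap R_def[symmetric]
    using fin notin by (simp add: card_short_cycles_insert)
qed

lemma short_cycles_other_Diff:
  "short_cycles (T - {a, b}) (cycles S f - {orbit f a}) = short_cycles T (cycles S f - {orbit f a})"
  using cycles_avoid by (intro short_cycles_cong) blast

lemma card_orbit_Int:
  "card (orbit f a \<inter> T) = card (orbit \<sigma> a \<inter> T) + card (orbit \<sigma> b \<inter> T)"
proof -
  have "finite (orbit f a)"
    using finite permutes_orbit_subset[OF permutes a_in] finite_subset by blast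
  then have "finite (orbit \<sigma> a \<inter> T)" "finite (orbit \<sigma> b \<inter> T)"
    using orbit_swap_Un by (metis finite_Int finite_Un)+
  moreover have "orbit f a \<inter> T = (orbit \<sigma> a \<inter> T) \<union> (orbit \<sigma> b \<inter> T)"
    using orbit_swap_Un by blast
  moreover have "(orbit \<sigma> a \<inter> T) \<inter> (orbit \<sigma> b \<inter> T) = {}"
    using orbit_swap_disjoint by blast
  ultimately show ?thesis by (simp add: card_Un_disjoint)
qed

lemma card_orbit_swap_b_Int_Diff:
  "card (orbit \<sigma> b \<inter> (T - {a, b})) = card {i \<in> {1..<dist}. (f ^^ i) a \<in> T}"
proof -
  let ?I = "{i \<in> {1..<dist}. (f ^^ i) a \<in> T}"
  have "orbit \<sigma> b \<inter> (T - {a, b}) = (\<lambda>i. (f ^^ i) a) ` ?I"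
  proof (intro set_eqI iffI)
    fix y assume y: "y \<in> orbit \<sigma> b \<inter> (T - {a, b})"
    then obtain i where i: "i \<in> {1..dist}" "y = (f ^^ i) a"
      unfolding orbit_swap_b by blast
    have "i \<noteq> dist" using y i funpow_dist by blast
    with i y have "i \<in> ?I" by auto
    with i show "y \<in> (\<lambda>i. (f ^^ i) a) ` ?I" by blast
  next
    fix y assume "y \<in> (\<lambda>i. (f ^^ i) a) ` ?I"
    then obtain i where i: "i \<in> ?I" "y = (f ^^ i) a" by blast
    then have "y \<noteq> a" "y \<noteq> b"
      using funpow_ne_a[of i] funpow_ne_b[of i] dist_less_period by auto
    then show "y \<in> orbit \<sigma> b \<inter> (T - {a, b})"
      unfolding orbit_swap_b using i by auto
  qed
  moreover have "inj_on (\<lambda>i. (f ^^ i) a) ?I"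
    by (rule inj_on_subset[OF funpow_inj]) (use dist_less_period in auto)
  ultimately show ?thesis by (simp add: card_image)
qed

lemma card_orbit_swap_Int_Diff:
  assumes "a \<in> T" "b \<in> T"
  shows "card (orbit \<sigma> a \<inter> (T - {a, b})) = card (orbit \<sigma> a \<inter> T) - 1"
    and "card (orbit \<sigma> b \<inter> (T - {a, b})) = card (orbit \<sigma> b \<inter> T) - 1"
proof -
  have "orbit \<sigma> a \<inter> (T - {a, b}) = orbit \<sigma> a \<inter> T - {a}"
    "orbit \<sigma> b \<inter> (T - {a, b}) = orbit \<sigma> b \<inter> T - {b}"
    using orbit_swap_disjoint in_orbit_swap by blast+
  then show "card (orbit \<sigma> a \<inter> (T - {a, b})) = card (orbit \<sigma> a \<inter> T) - 1"
    "card (orbit \<sigma> b \<inter> (T - {a, b})) = card (orbit \<sigma> b \<inter> T) - 1"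
    using assms in_orbit_swap by (simp_all add: card_Diff_singleton_if)
qed

end

lemma orbit_swap_merge:
  assumes "permutation f" "b \<notin> orbit f a"
  shows "b \<in> orbit (f \<circ> transpose a b) a"
proof -
  define q where "q = funpow_dist1 f b b"
  have b_orbit: "b \<in> orbit f b" by (rule permutation_self_in_orbit[OF assms(1)])
  have a_notin: "a \<notin> orbit f b"
    using assms orbit_eq_of_mem permutation_self_in_orbit by metis
  have "((f \<circ> transpose a b) ^^ q) a = (f ^^ q) b"
  proof (rule funpow_agree_along_orbit[where n=q])
    fix i assume "0 < i" "i < q"
    then have "(f ^^ i) b \<noteq> b" "(f ^^ i) b \<noteq> a"
      using funpow_dist1_least[of i f b b] a_notin funpow_in_orbit[OF b_orbit, of i]
      by (auto simp: q_def)
    then show "(f \<circ> transpose a b) ((f ^^ i) b) = f ((f ^^ i) b)" by simp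
  qed (simp_all add: q_def)
  also have "\<dots> = b" using funpow_dist1_prop[OF b_orbit] by (simp add: q_def)
  finally have "((f \<circ> transpose a b) ^^ q) a = b" .
  moreover have "0 < q" by (simp add: q_def)
  ultimately show ?thesis unfolding orbit_altdef by (auto intro!: exI[where x=q])
qed

text \<open>Merging is splitting read backwards: \<open>b\<close> lies on the cycle of \<open>a\<close> in
  \<open>f \<circ> transpose a b\<close>, and composing once more with \<open>transpose a b\<close> gives back \<open>f\<close>.\<close>

lemma potential_merge:
  assumes "finite S" "f permutes S" "T \<subseteq> S" "a \<in> T" "b \<in> T" "b \<notin> orbit f a"
  shows "potential S (T - {a, b}) (f \<circ> transpose a b) \<le> potential S T f"
proof -
  have perm: "permutation f" using assms(1,2) permutation_permutes by blast
  have "a \<noteq> b" using assms(6) permutation_self_in_orbit[OF perm] by blast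
  interpret m: transposition_in_cycle S "f \<circ> transpose a b" a b
    using assms perm \<open>a \<noteq> b\<close>
    by unfold_locales (auto intro: permutes_compose permutes_swap_id orbit_swap_merge)
  have undo: "f \<circ> transpose a b \<circ> transpose a b = f" by (simp add: fun_eq_iff)
  have in_T: "card (orbit f x \<inter> T) \<ge> 1" if "x \<in> T" for x
  proof -
    have "finite (orbit f x)"
      using assms(1,3) that permutes_orbit_subset[OF assms(2)] finite_subset by blast
    then show ?thesis
      using that permutation_self_in_orbit[OF perm] by (auto simp: Suc_le_eq card_gt_0_iff)
  qed
  define K where "K = card (short_cycles T (cycles S (f \<circ> transpose a b) - {orbit (f \<circ> transpose a b) a}))"
  define u v where "u = card (orbit f a \<inter> (T - {a, b}))" and "v = card (orbit f b \<inter> (T - {a, b}))"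
  have "potential S T f = K + of_bool (u + 1 \<le> 2) + of_bool (v + 1 \<le> 2)"
    using m.potential_swap[of T] m.card_orbit_swap_Int_Diff[OF assms(4,5)]
      in_T[OF assms(4)] in_T[OF assms(5)]
    unfolding undo K_def u_def v_def by simp
  moreover have "potential S (T - {a, b}) (f \<circ> transpose a b) = K + of_bool (u + v \<le> 2)"
    using potential_remove_orbit[OF assms(1), of a "T - {a, b}" "f \<circ> transpose a b"]
      m.short_cycles_other_Diff[of T] m.card_orbit_Int[of "T - {a, b}"] assms(3,4)
    unfolding undo K_def u_def v_def by auto
  ultimately show ?thesis by simp
qed

lemma orbit_Int_Diff_eq_image:
  fixes T :: "'a set"
  assumes "a \<in> orbit f a"
  defines "D \<equiv> {i \<in> {1..<funpow_dist1 f a a}. (f ^^ i) a \<in> T}"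
  shows "orbit f a \<inter> T - {a} = (\<lambda>i. (f ^^ i) a) ` D" and "inj_on (\<lambda>i. (f ^^ i) a) D"
proof -
  define p where "p = funpow_dist1 f a a"
  define g where "g i = (f ^^ i) a" for i
  have D: "D = {i \<in> {1..<p}. g i \<in> T}" by (simp add: D_def p_def g_def)
  have A: "orbit f a = g ` {1..p}"
    unfolding g_def p_def
    by (rule orbit_conv_funpow_period[OF funpow_dist1_prop[OF assms(1)]]) simp
  have gp: "g p = a"
    using funpow_dist1_prop[OF assms(1)] by (simp add: g_def p_def)
  have g_ne: "g i \<noteq> a" if "0 < i" "i < p" for i
    using funpow_dist1_least[OF that[unfolded p_def]] by (simp add: g_def)
  have "orbit f a \<inter> T - {a} = g ` D"
  proof (intro set_eqI iffI)
    fix y assume y: "y \<in> orbit f a \<inter> T - {a}"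
    then obtain i where i: "i \<in> {1..p}" "y = g i" unfolding A by blast
    with y gp have "i \<noteq> p" by blast
    with i y have "i \<in> D" unfolding D by auto
    with i show "y \<in> g ` D" by blast
  next
    fix y assume "y \<in> g ` D"
    then obtain i where "i \<in> D" "y = g i" by blast
    then show "y \<in> orbit f a \<inter> T - {a}" unfolding A D using g_ne[of i] by auto
  qed
  then show "orbit f a \<inter> T - {a} = (\<lambda>i. (f ^^ i) a) ` D" by (simp add: g_def)
  show "inj_on (\<lambda>i. (f ^^ i) a) D"
    by (rule inj_on_subset[OF inj_on_funpow_period[OF assms(1)]]) (auto simp: D_def)
qed

lemma card_orbit_Int_funpow:
  assumes "a \<in> orbit f a" "a \<in> T"
  shows "card (orbit f a \<inter> T) = card {i \<in> {1..<funpow_dist1 f a a}. (f ^^ i) a \<in> T} + 1"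
proof -
  let ?D = "{i \<in> {1..<funpow_dist1 f a a}. (f ^^ i) a \<in> T}"
  have "finite ?D" by (rule finite_subset[of _ "{1..<funpow_dist1 f a a}"]) auto
  then have "finite (orbit f a \<inter> T - {a})"
    using orbit_Int_Diff_eq_image(1)[OF assms(1), of T] by simp
  moreover have "orbit f a \<inter> T = insert a (orbit f a \<inter> T - {a})" using assms by blast
  ultimately have "card (orbit f a \<inter> T) = card (orbit f a \<inter> T - {a}) + 1"
    by (metis card_insert_disjoint Diff_iff insertI1 Suc_eq_plus1)
  also have "card (orbit f a \<inter> T - {a}) = card ?D"
    using orbit_Int_Diff_eq_image[OF assms(1), of T] by (simp add: card_image)
  finally show ?thesis .
qed

text \<open>\<open>D\<close> lists the positions of the other points of \<open>T\<close> along the cycle of \<open>a\<close>; cutting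
  this cycle at position \<open>j\<close> leaves the points at positions in \<open>D\<close> below \<open>j\<close> on the cycle of
  \<open>b\<close> and the rest on the cycle of \<open>a\<close>.\<close>

lemma potential_split:
  assumes "finite S" "f permutes S" "T \<subseteq> S" "a \<in> T"
    and "0 < j" "j < funpow_dist1 f a a" "(f ^^ j) a \<in> T"
  defines "D \<equiv> {i \<in> {1..<funpow_dist1 f a a}. (f ^^ i) a \<in> T}"
  shows "potential S (T - {a, (f ^^ j) a}) (f \<circ> transpose a ((f ^^ j) a)) =
      card (short_cycles T (cycles S f - {orbit f a}))
      + of_bool (card D - Suc (card {i \<in> D. i < j}) \<le> 2) + of_bool (card {i \<in> D. i < j} \<le> 2)"
proof -
  define b where "b = (f ^^ j) a"
  have perm: "permutation f" using assms(1,2) permutation_permutes by blast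
  have a_orbit: "a \<in> orbit f a" by (rule permutation_self_in_orbit[OF perm])
  have "a \<noteq> b" using funpow_dist1_least[OF assms(5,6)] by (simp add: b_def)
  have b_T: "b \<in> T" using assms(7) by (simp add: b_def)
  interpret s: transposition_in_cycle S f a b
    using assms(1-4) \<open>a \<noteq> b\<close> funpow_in_orbit[OF a_orbit]
    by unfold_locales (auto simp: b_def)
  have "j \<le> s.period" using assms(6) by (simp add: s.period_def)
  then have dist: "s.dist = j" using s.funpow_ne_b[OF assms(5)] b_def by metis
  have "{i \<in> {1..<j}. (f ^^ i) a \<in> T} = {i \<in> D. i < j}"
    using assms(6) by (auto simp: D_def)
  then have card_b: "card (orbit s.\<sigma> b \<inter> (T - {a, b})) = card {i \<in> D. i < j}"
    using s.card_orbit_swap_b_Int_Diff[of T] by (simp add: dist)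
  have "finite (orbit f a)"
    using assms(1) permutes_orbit_subset[OF assms(2)] assms(3,4) finite_subset by blast
  then have "finite (orbit s.\<sigma> a)" "finite (orbit s.\<sigma> b)"
    using s.orbit_swap_Un by (metis finite_Un)+
  then have "card (orbit s.\<sigma> a \<inter> T) \<ge> 1" "card (orbit s.\<sigma> b \<inter> T) \<ge> 1"
    using s.in_orbit_swap assms(4) b_T by (auto simp: Suc_le_eq card_gt_0_iff)
  moreover have "card (orbit s.\<sigma> a \<inter> T) + card (orbit s.\<sigma> b \<inter> T) = card D + 1"
    using s.card_orbit_Int[of T] card_orbit_Int_funpow[OF a_orbit assms(4)] by (simp add: D_def)
  ultimately have card_a: "card (orbit s.\<sigma> a \<inter> (T - {a, b})) = card D - Suc (card {i \<in> D. i < j})"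
    using s.card_orbit_swap_Int_Diff[OF assms(4) b_T] card_b by simp
  show ?thesis
    using s.potential_swap[of "T - {a, b}"] s.short_cycles_other_Diff[of T] card_a card_b
    by (simp add: b_def)
qed

section \<open>Revealing the matching one pair at a time\<close>

lemma bij_betw_rank:
  fixes D :: "nat set"
  assumes "finite D"
  shows "bij_betw (\<lambda>j. card {i \<in> D. i < j}) D {..<card D}"
proof -
  have mono: "card {i \<in> D. i < u} < card {i \<in> D. i < v}" if "u \<in> D" "u < v" for u v
    using assms that by (intro psubset_card_mono) auto
  have inj: "inj_on (\<lambda>j. card {i \<in> D. i < j}) D"
  proof (rule inj_onI, rule ccontr)
    fix u v assume "u \<in> D" "v \<in> D" "card {i \<in> D. i < u} = card {i \<in> D. i < v}" "u \<noteq> v"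
    then show False using mono[of u v] mono[of v u] by (cases "u < v") auto
  qed
  have "card {i \<in> D. i < j} < card D" if "j \<in> D" for j
    using assms that by (intro psubset_card_mono) auto
  then have "(\<lambda>j. card {i \<in> D. i < j}) ` D \<subseteq> {..<card D}" by auto
  moreover have "card ((\<lambda>j. card {i \<in> D. i < j}) ` D) = card {..<card D}"
    using card_image[OF inj] by simp
  ultimately have "(\<lambda>j. card {i \<in> D. i < j}) ` D = {..<card D}"
    by (intro card_subset_eq) auto
  then show ?thesis using inj by (simp add: bij_betw_def)
qed

lemma sum_of_bool_le_2: "(\<Sum>r<n. of_bool (r \<le> 2) :: real) = real (min n 3)"
  by (induction n) (auto simp del: sum_of_bool_eq)

text \<open>For \<open>e \<le> 2\<close> we have \<open>(5/4)^e \<le> 1 + 9/32 * e\<close>, and each of the two indicators is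
  set for at most three values of \<open>r\<close>.\<close>

lemma sum_split_weights_le:
  "(\<Sum>r<n. (5/4::real) ^ (of_bool (n - Suc r \<le> 2) + of_bool (r \<le> 2)))
     \<le> real (n + 2) * (5/4) ^ of_bool (n + 1 \<le> 2)"
proof (cases "n \<le> 1")
  case True
  then have "n = 0 \<or> n = 1" by auto
  then show ?thesis by auto
next
  case False
  have term_le: "(5/4::real) ^ (of_bool P + of_bool Q) \<le> 1 + 9/32 * of_bool P + 9/32 * of_bool Q"
    for P Q by (cases P; cases Q) simp_all
  have "(\<Sum>r<n. (5/4::real) ^ (of_bool (n - Suc r \<le> 2) + of_bool (r \<le> 2)))
      \<le> (\<Sum>r<n. 1 + 9/32 * of_bool (n - Suc r \<le> 2) + 9/32 * of_bool (r \<le> 2))"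
    by (intro sum_mono term_le)
  also have "\<dots> = n + 9/32 * (\<Sum>r<n. of_bool (n - Suc r \<le> 2)) + 9/32 * (\<Sum>r<n. of_bool (r \<le> 2))"
    by (simp add: sum.distrib sum_distrib_left del: sum_of_bool_eq)
  also have "(\<Sum>r<n. of_bool (n - Suc r \<le> 2) :: real) = (\<Sum>r<n. of_bool (r \<le> 2))"
    by (rule sum.nat_diff_reindex)
  finally show ?thesis using False by (simp add: sum_of_bool_le_2 del: sum_of_bool_eq)
qed

lemma sum_potential_split:
  assumes "finite S" "f permutes S" "T \<subseteq> S" "a \<in> T"
  shows "(\<Sum>b\<in>orbit f a \<inter> T - {a}. (5/4::real) ^ potential S (T - {a, b}) (f \<circ> transpose a b))
    \<le> real (card (orbit f a \<inter> T) + 1) * (5/4) ^ potential S T f"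
proof -
  define X :: real where "X = 5/4"
  define g where "g i = (f ^^ i) a" for i
  define D where "D = {i \<in> {1..<funpow_dist1 f a a}. g i \<in> T}"
  define K where "K = card (short_cycles T (cycles S f - {orbit f a}))"
  define h where "h b = X ^ potential S (T - {a, b}) (f \<circ> transpose a b)" for b
  define rank where "rank j = card {i \<in> D. i < j}" for j
  have perm: "permutation f" using assms(1,2) permutation_permutes by blast
  have a_A: "a \<in> orbit f a" by (rule permutation_self_in_orbit[OF perm])
  have card_A: "card (orbit f a \<inter> T) = card D + 1"
    using card_orbit_Int_funpow[OF a_A assms(4)] by (simp add: D_def g_def)
  have pot: "potential S T f = K + of_bool (card D + 1 \<le> 2)"
    using potential_remove_orbit[OF assms(1) subsetD[OF assms(3,4)], of T f] card_A
    by (simp add: K_def)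
  have "(\<Sum>b\<in>orbit f a \<inter> T - {a}. h b)
      = (\<Sum>j\<in>D. X ^ K * X ^ (of_bool (card D - Suc (rank j) \<le> 2) + of_bool (rank j \<le> 2)))"
  proof (rule sum.reindex_cong[where l=g])
    show "inj_on g D" "orbit f a \<inter> T - {a} = g ` D"
      using orbit_Int_Diff_eq_image[OF a_A, of T] unfolding D_def g_def by simp_all
    fix j assume "j \<in> D"
    then show "h (g j) = X ^ K * X ^ (of_bool (card D - Suc (rank j) \<le> 2) + of_bool (rank j \<le> 2))"
      using potential_split[OF assms, of j]
      by (simp add: h_def D_def g_def K_def rank_def power_add)
  qed
  also have "\<dots> = X ^ K * (\<Sum>r<card D. X ^ (of_bool (card D - Suc r \<le> 2) + of_bool (r \<le> 2)))"
    unfolding sum_distrib_left[symmetric] rank_def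
    by (subst sum.reindex_bij_betw[OF bij_betw_rank,
          where g="\<lambda>r. X ^ (of_bool (card D - Suc r \<le> 2) + of_bool (r \<le> 2))"])
      (simp_all add: D_def)
  also have "\<dots> \<le> X ^ K * (real (card D + 2) * X ^ of_bool (card D + 1 \<le> 2))"
    unfolding X_def by (intro mult_left_mono sum_split_weights_le) simp
  also have "\<dots> = real (card (orbit f a \<inter> T) + 1) * X ^ potential S T f"
    by (simp add: pot card_A power_add)
  finally show ?thesis unfolding h_def X_def by simp
qed

lemma sum_potential_swap:
  assumes "finite S" "f permutes S" "T \<subseteq> S" "a \<in> T"
  shows "(\<Sum>b\<in>T - {a}. (5/4::real) ^ potential S (T - {a, b}) (f \<circ> transpose a b))
    \<le> real (card T + 1) * (5/4) ^ potential S T f"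
proof -
  define X :: real where "X = 5/4"
  define A where "A = orbit f a"
  define h where "h b = X ^ potential S (T - {a, b}) (f \<circ> transpose a b)" for b
  have fin_T: "finite T" using assms(1,3) finite_subset by blast
  have "permutation f" using assms(1,2) permutation_permutes by blast
  then have "a \<in> A" unfolding A_def by (rule permutation_self_in_orbit)
  then have "T - {a} = (T - A) \<union> (A \<inter> T - {a})" by blast
  then have "(\<Sum>b\<in>T - {a}. h b) = (\<Sum>b\<in>T - A. h b) + (\<Sum>b\<in>A \<inter> T - {a}. h b)"
    using fin_T by (simp only:) (rule sum.union_disjoint; auto)
  also have "(\<Sum>b\<in>T - A. h b) \<le> real (card (T - A)) * X ^ potential S T f"
  proof (rule sum_bounded_above[where K="X ^ potential S T f", simplified])
    fix b assume "b \<in> T - A"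
    then have "potential S (T - {a, b}) (f \<circ> transpose a b) \<le> potential S T f"
      using assms by (intro potential_merge) (auto simp: A_def)
    then show "h b \<le> X ^ potential S T f"
      by (simp add: h_def X_def power_increasing)
  qed
  also have "(\<Sum>b\<in>A \<inter> T - {a}. h b) \<le> real (card (A \<inter> T) + 1) * X ^ potential S T f"
    using sum_potential_split[OF assms] unfolding h_def X_def A_def .
  also have "real (card (T - A)) * X ^ potential S T f + real (card (A \<inter> T) + 1) * X ^ potential S T f
      = real (card T + 1) * X ^ potential S T f"
  proof -
    have "card (T - A) = card T - card (A \<inter> T)"
      using fin_T by (simp add: card_Diff_subset_Int Int_commute)
    moreover have "card (A \<inter> T) \<le> card T" using fin_T by (simp add: card_mono)
    ultimately have "real (card (T - A)) + real (card (A \<inter> T) + 1) = real (card T + 1)"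
      by simp
    then show ?thesis by (metis distrib_right)
  qed
  finally show ?thesis unfolding h_def X_def by simp
qed

lemma potential_empty: "potential S {} f = card (cycles S f)"
  by (simp add: potential_def short_cycles_def)

lemma card_perfect_matchings_remove_pair:
  assumes "finite T" "a \<in> T" "b \<in> T" "a \<noteq> b"
  shows "card (perfect_matchings (T - {a, b})) * (card (T - {a, b}) + 1) = card (perfect_matchings T)"
proof -
  have "card {a, b} \<le> card T" using assms by (intro card_mono) auto
  moreover have "card {a, b} = 2" using assms(4) by simp
  ultimately have "card (T - {a, b}) = card T - 2" "card T - 2 + 1 = card T - 1" "0 < card T"
    using assms by (simp_all add: card_Diff_subset)
  then show ?thesis
    using matching_count_rec[of "card T"] assms(1) by (simp add: card_perfect_matchings)
qed

lemma sum_perfect_matchings_pow_cycles_le: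
  assumes "finite S" "f permutes S" "T \<subseteq> S"
  shows "(\<Sum>\<alpha>\<in>perfect_matchings T. (5/4::real) ^ card (cycles S (f \<circ> \<alpha>)))
    \<le> real (card (perfect_matchings T)) * real (card T + 1) * (5/4) ^ potential S T f"
  using assms(2,3)
proof (induction "card T" arbitrary: T f rule: less_induct)
  case less
  have fin_T: "finite T" using assms(1) less.prems(2) finite_subset by blast
  show ?case
  proof (cases "T = {}")
    case True
    then show ?thesis by (simp add: perfect_matchings_empty potential_empty)
  next
    case False
    then obtain a where a: "a \<in> T" by auto
    have "(\<Sum>\<alpha>\<in>perfect_matchings T. (5/4::real) ^ card (cycles S (f \<circ> \<alpha>)))
        = (\<Sum>b\<in>T - {a}. \<Sum>\<alpha>\<in>perfect_matchings (T - {a, b}).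
            (5/4) ^ card (cycles S ((f \<circ> transpose a b) \<circ> \<alpha>)))"
      using sum_perfect_matchings[OF fin_T a] by (simp add: comp_assoc)
    also have "\<dots> \<le> (\<Sum>b\<in>T - {a}. real (card (perfect_matchings T))
        * (5/4) ^ potential S (T - {a, b}) (f \<circ> transpose a b))"
    proof (rule sum_mono)
      fix b assume b: "b \<in> T - {a}"
      have "card (T - {a, b}) < card T"
        using a b fin_T by (intro psubset_card_mono) auto
      moreover have "f \<circ> transpose a b permutes S"
        using less.prems a b by (intro permutes_compose permutes_swap_id) auto
      moreover have "T - {a, b} \<subseteq> S" using less.prems(2) by blast
      ultimately have "(\<Sum>\<alpha>\<in>perfect_matchings (T - {a, b}).
            (5/4::real) ^ card (cycles S ((f \<circ> transpose a b) \<circ> \<alpha>)))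
          \<le> real (card (perfect_matchings (T - {a, b}))) * real (card (T - {a, b}) + 1)
            * (5/4) ^ potential S (T - {a, b}) (f \<circ> transpose a b)"
        by (rule less.hyps)
      also have "real (card (perfect_matchings (T - {a, b}))) * real (card (T - {a, b}) + 1)
          = real (card (perfect_matchings T))"
        using card_perfect_matchings_remove_pair[OF fin_T a, of b] b by (metis DiffD1 DiffD2
            insertCI of_nat_mult)
      finally show "(\<Sum>\<alpha>\<in>perfect_matchings (T - {a, b}).
            (5/4::real) ^ card (cycles S ((f \<circ> transpose a b) \<circ> \<alpha>)))
          \<le> real (card (perfect_matchings T)) * (5/4) ^ potential S (T - {a, b}) (f \<circ> transpose a b)" .
    qed
    also have "\<dots> = real (card (perfect_matchings T))
        * (\<Sum>b\<in>T - {a}. (5/4) ^ potential S (T - {a, b}) (f \<circ> transpose a b))"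
      by (simp add: sum_distrib_left)
    also have "\<dots> \<le> real (card (perfect_matchings T)) * (real (card T + 1) * (5/4) ^ potential S T f)"
      using sum_potential_swap[OF assms(1) less.prems a] by (intro mult_left_mono) simp_all
    finally show ?thesis by (simp add: mult.assoc comp_def)
  qed
qed

lemma card_orbit_eq_2_iff:
  assumes "finite S" "\<alpha> permutes S" "x \<in> S"
  shows "card (orbit \<alpha> x) = 2 \<longleftrightarrow> \<alpha> x \<noteq> x \<and> \<alpha> (\<alpha> x) = x"
proof
  assume inv: "\<alpha> x \<noteq> x \<and> \<alpha> (\<alpha> x) = x"
  then have "orbit \<alpha> x = {(\<alpha> ^^ m) x | m. m < 2}"
    by (intro orbit_altdef_bounded) (simp_all add: numeral_2_eq_2)
  also have "\<dots> = {x, \<alpha> x}"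
    by (auto simp: numeral_2_eq_2 less_Suc_eq) (metis funpow_0, metis funpow_simps_right(1,2) id_apply o_apply)
  finally show "card (orbit \<alpha> x) = 2" using inv by (auto simp: card_insert_if)
next
  assume two: "card (orbit \<alpha> x) = 2"
  have fin: "finite (orbit \<alpha> x)"
    using finite_subset[OF permutes_orbit_subset[OF assms(2,3)] assms(1)] .
  have sub: "{x, \<alpha> x, \<alpha> (\<alpha> x)} \<subseteq> orbit \<alpha> x"
    using permutation_self_in_orbit[of \<alpha> x] assms permutation_permutes
    by (blast intro: orbit.intros)
  have ne: "\<alpha> x \<noteq> x"
  proof
    assume "\<alpha> x = x"
    then have "orbit \<alpha> x = {x}" by (simp add: orbit_eq_singleton_iff)
    with two show False by simp
  qed
  moreover have "\<alpha> (\<alpha> x) = x"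
  proof (rule ccontr)
    assume "\<alpha> (\<alpha> x) \<noteq> x"
    moreover have "\<alpha> (\<alpha> x) \<noteq> \<alpha> x"
      using ne permutes_inj[OF assms(2)] by (auto dest: injD)
    ultimately have "card {x, \<alpha> x, \<alpha> (\<alpha> x)} = 3" using ne by auto
    with card_mono[OF fin sub] two show False by simp
  qed
  ultimately show "\<alpha> x \<noteq> x \<and> \<alpha> (\<alpha> x) = x" by simp
qed

lemma cyc_class_2_eq: "cyc_class N 2 = perfect_matchings {1..N}"
  using card_orbit_eq_2_iff[of "{1..N}"] by (auto simp: cyc_class_def perfect_matchings_def)

lemma potential_cyc_class:
  assumes "3 \<le> k" "\<beta> \<in> cyc_class N k"
  shows "potential {1..N} {1..N} \<beta> = 0"
proof -
  have "\<not> card (orbit \<beta> x \<inter> {1..N}) \<le> 2" if "x \<in> {1..N}" for x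
  proof -
    have "orbit \<beta> x \<subseteq> {1..N}"
      using assms(2) that by (intro permutes_orbit_subset) (auto simp: cyc_class_def)
    then show ?thesis using assms that by (auto simp: cyc_class_def Int_absorb2)
  qed
  then show ?thesis by (auto simp: potential_def short_cycles_def cycles_def)
qed

lemma card_ge_pow_le_sum:
  fixes X :: real
  assumes "finite A" "1 \<le> X"
  shows "real (card {x \<in> A. t \<le> c x}) * X ^ t \<le> (\<Sum>x\<in>A. X ^ c x)"
proof -
  have "real (card {x \<in> A. t \<le> c x}) * X ^ t = (\<Sum>x\<in>{x \<in> A. t \<le> c x}. X ^ t)" by simp
  also have "\<dots> \<le> (\<Sum>x\<in>{x \<in> A. t \<le> c x}. X ^ c x)"
    using assms(2) by (intro sum_mono power_increasing) auto
  also have "\<dots> \<le> (\<Sum>x\<in>A. X ^ c x)"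
    using assms by (intro sum_mono2) auto
  finally show ?thesis .
qed

lemma power_4_5_le_powr: "(4/5::real) ^ t \<le> (2/3) powr (real t / 2)"
proof -
  have "(4/5::real) ^ t = (4/5) powr (real t)" by (simp add: powr_realpow)
  also have "\<dots> = ((4/5) powr 2) powr (real t / 2)" by (subst powr_powr) simp
  also have "(4/5::real) powr 2 = 16/25" by (simp add: powr_numeral power2_eq_square)
  also have "(16/25::real) powr (real t / 2) \<le> (2/3) powr (real t / 2)"
    by (rule powr_mono2) auto
  finally show ?thesis .
qed

theorem theorem1p2:
  fixes k :: nat
  assumes "k \<ge> 3"
  shows "\<exists>C::real. \<exists>N0::nat. \<forall>N \<ge> N0. \<forall>\<beta> t. N > 0 \<longrightarrow> lcm 2 k dvd N \<longrightarrow>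
           \<beta> \<in> cyc_class N k \<longrightarrow> prob_cycles_ge N \<beta> t \<le> C * (2/3) powr (real t / 2) * real N"
proof (intro exI[of _ 2] exI[of _ 0] allI impI)
  fix N :: nat and \<beta> :: "nat \<Rightarrow> nat" and t :: nat
  assume N: "N > 0" and \<beta>: "\<beta> \<in> cyc_class N k"
  define M where "M = perfect_matchings {1..N}"
  define C where "C \<alpha> = card (cycles {1..N} (\<beta> \<circ> \<alpha>))" for \<alpha>
  have "\<beta> permutes {1..N}" using \<beta> by (simp add: cyc_class_def)
  then have "(\<Sum>\<alpha>\<in>M. (5/4::real) ^ C \<alpha>) \<le> real (card M) * real (N + 1)"
    using sum_perfect_matchings_pow_cycles_le[of "{1..N}" \<beta> "{1..N}"] potential_cyc_class[OF assms \<beta>]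
    by (simp add: M_def C_def)
  then have "real (card {\<alpha> \<in> M. t \<le> C \<alpha>}) * (5/4) ^ t \<le> real (card M) * real (N + 1)"
    using card_ge_pow_le_sum[of M "5/4" t C] by (simp add: M_def finite_perfect_matchings)
  then have "prob_cycles_ge N \<beta> t \<le> real (N + 1) * (4/5) ^ t"
    by (cases "card M = 0")
      (simp_all add: prob_cycles_ge_def cyc_class_2_eq num_cycles_def cycles_def C_def M_def
        field_simps power_divide)
  also have "\<dots> \<le> (2 * real N) * (2/3) powr (real t / 2)"
    using N by (intro mult_mono power_4_5_le_powr) auto
  finally show "prob_cycles_ge N \<beta> t \<le> 2 * (2/3) powr (real t / 2) * real N"
    by (simp add: mult_ac)
qed

end
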